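(* Let $(A,\dashv,\perp,\vdash,\varepsilon)$ be an associative color trialgebra. Then $A$ is a ternary Leibniz color algebra with respect to the bracket $$[x,y,z]:=x\dashv\big(y\perp z-\varepsilon(y,z)\,z\perp y\big)-\varepsilon(x,y+z)\big(y\perp z-\varepsilon(y,z)\,z\perp y\big)\vdash x$$ for all $x,y,z\in\mathcal{H}(A)$.
   Context: $G$ is an abelian group, $\mathbb{K}$ a field of characteristic $\neq 2$, $\mathcal{H}(V)$ the homogeneous elements of a $G$-graded space $V$; even maps preserve degree. A skew-symmetric bicharacter $\varepsilon:G\times G\to\mathbb{K}^*$ satisfies $\varepsilon(a,b)\varepsilon(b,a)=1$, $\varepsilon(a,b+c)=\varepsilon(a,b)\varepsilon(a,c)$, $\varepsilon(a+b,c)=\varepsilon(a,c)\varepsilon(b,c)$; $\varepsilon(x,y)$ means $\varepsilon$ of the degrees. An associative color trialgebra is a $G$-graded space $A$ with such $\varepsilon$ and three even bilinear associative operations $\dashv,\perp,\vdash$ satisfying, for all homogeneous $x,y,z$: $(x\dashv y)\dashv z=x\dashv(y\vdash z)=x\dashv(y\perp z)$; $(x\vdash y)\dashv z=x\vdash(y\dashv z)$; $(x\dashv y)\vdash z=x\vdash(y\vdash z)=(x\perp y)\vdash z$; $(x\perp y)\dashv z=x\perp(y\dashv z)$; $(x\dashv y)\perp z=x\perp(y\vdash z)$; $(x\vdash y)\perp z=x\vdash(y\perp z)$. A ternary Leibniz color algebra is a $G$-graded space with such $\varepsilon$ and an even trilinear $[-,-,-]$ satisfying $[[x,y,z],t,u]=[x,y,[z,t,u]]+\varepsilon(z,t+u)[x,[y,t,u],z]+\varepsilon(y+z,t+u)[[x,t,u],y,z]$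 for all homogeneous $x,y,z,t,u$. *)

theory Defs
  imports Complex_Main
begin

definition graded_space ::
  "('k::field \<Rightarrow> 'v::ab_group_add \<Rightarrow> 'v) \<Rightarrow> ('g::ab_group_add \<Rightarrow> 'v set) \<Rightarrow> bool" where
  "graded_space scale V \<longleftrightarrow>
     module scale \<and>
     (\<forall>g. module.subspace scale (V g)) \<and>
     (\<forall>v. \<exists>!c. (\<forall>g. c g \<in> V g) \<and> finite {g. c g \<noteq> 0} \<and>
                v = (\<Sum>g\<in>{g. c g \<noteq> 0}. c g))"

definition skew_bicharacter :: "('g::ab_group_add \<Rightarrow> 'g \<Rightarrow> 'k::field) \<Rightarrow> bool" where
  "skew_bicharacter eps \<longleftrightarrow>
     (\<forall>a b. eps a b \<noteq> 0) \<and>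
     (\<forall>a b. eps a b * eps b a = 1) \<and>
     (\<forall>a b c. eps a (b + c) = eps a b * eps a c) \<and>
     (\<forall>a b c. eps (a + b) c = eps a c * eps b c)"

definition even_bilinear ::
  "('k::field \<Rightarrow> 'v::ab_group_add \<Rightarrow> 'v) \<Rightarrow> ('g::ab_group_add \<Rightarrow> 'v set) \<Rightarrow> ('v \<Rightarrow> 'v \<Rightarrow> 'v) \<Rightarrow> bool" where
  "even_bilinear scale V f \<longleftrightarrow>
     (\<forall>x y z. f (x + y) z = f x z + f y z) \<and>
     (\<forall>x y z. f x (y + z) = f x y + f x z) \<and>
     (\<forall>k x y. f (scale k x) y = scale k (f x y)) \<and>
     (\<forall>k x y. f x (scale k y) = scale k (f x y)) \<and>
     (\<forall>a b x y. x \<in> V a \<longrightarrow> y \<in> V b \<longrightarrow> f x y \<in> V (a + b))"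

definition even_trilinear ::
  "('k::field \<Rightarrow> 'v::ab_group_add \<Rightarrow> 'v) \<Rightarrow> ('g::ab_group_add \<Rightarrow> 'v set) \<Rightarrow> ('v \<Rightarrow> 'v \<Rightarrow> 'v \<Rightarrow> 'v) \<Rightarrow> bool" where
  "even_trilinear scale V T \<longleftrightarrow>
     (\<forall>x x' y z. T (x + x') y z = T x y z + T x' y z) \<and>
     (\<forall>x y y' z. T x (y + y') z = T x y z + T x y' z) \<and>
     (\<forall>x y z z'. T x y (z + z') = T x y z + T x y z') \<and>
     (\<forall>k x y z. T (scale k x) y z = scale k (T x y z)) \<and>
     (\<forall>k x y z. T x (scale k y) z = scale k (T x y z)) \<and>
     (\<forall>k x y z. T x y (scale k z) = scale k (T x y z)) \<and>
     (\<forall>a b c x y z. x \<in> V a \<longrightarrow> y \<in> V b \<longrightarrow> z \<in> V c \<longrightarrow> T x y z \<in> V (a + b + c))"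

text \<open>Associative color trialgebra \<open>(A, \<dashv>, \<perp>, \<turnstile>, \<epsilon>)\<close>; here \<open>l\<close> is \<open>\<dashv>\<close>,
  \<open>p\<close> is \<open>\<perp>\<close> and \<open>r\<close> is \<open>\<turnstile>\<close>.\<close>

definition assoc_color_trialgebra ::
  "('k::field \<Rightarrow> 'v::ab_group_add \<Rightarrow> 'v) \<Rightarrow> ('g::ab_group_add \<Rightarrow> 'v set) \<Rightarrow> ('g \<Rightarrow> 'g \<Rightarrow> 'k)
   \<Rightarrow> ('v \<Rightarrow> 'v \<Rightarrow> 'v) \<Rightarrow> ('v \<Rightarrow> 'v \<Rightarrow> 'v) \<Rightarrow> ('v \<Rightarrow> 'v \<Rightarrow> 'v) \<Rightarrow> bool" where
  "assoc_color_trialgebra scale V eps l p r \<longleftrightarrow>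
     graded_space scale V \<and> skew_bicharacter eps \<and>
     even_bilinear scale V l \<and> even_bilinear scale V p \<and> even_bilinear scale V r \<and>
     (\<forall>x y z. l (l x y) z = l x (l y z)) \<and>
     (\<forall>x y z. p (p x y) z = p x (p y z)) \<and>
     (\<forall>x y z. r (r x y) z = r x (r y z)) \<and>
     (\<forall>a b c x y z. x \<in> V a \<longrightarrow> y \<in> V b \<longrightarrow> z \<in> V c \<longrightarrow>
        l (l x y) z = l x (r y z) \<and> l x (r y z) = l x (p y z) \<and>
        l (r x y) z = r x (l y z) \<and>
        r (l x y) z = r x (r y z) \<and> r x (r y z) = r (p x y) z \<and>
        l (p x y) z = p x (l y z) \<and>
        p (l x y) z = p x (r y z) \<and>
        p (r x y) z = r x (p y z))"

definition ternary_leibniz_color ::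
  "('k::field \<Rightarrow> 'v::ab_group_add \<Rightarrow> 'v) \<Rightarrow> ('g::ab_group_add \<Rightarrow> 'v set) \<Rightarrow> ('g \<Rightarrow> 'g \<Rightarrow> 'k)
   \<Rightarrow> ('v \<Rightarrow> 'v \<Rightarrow> 'v \<Rightarrow> 'v) \<Rightarrow> bool" where
  "ternary_leibniz_color scale V eps T \<longleftrightarrow>
     graded_space scale V \<and> skew_bicharacter eps \<and> even_trilinear scale V T \<and>
     (\<forall>a b c d e x y z t u. x \<in> V a \<longrightarrow> y \<in> V b \<longrightarrow> z \<in> V c \<longrightarrow> t \<in> V d \<longrightarrow> u \<in> V e \<longrightarrow>
        T (T x y z) t u =
          T x y (T z t u) + scale (eps c (d + e)) (T x (T y t u) z)
          + scale (eps (b + c) (d + e)) (T (T x t u) y z))"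

text \<open>The bracket on homogeneous elements \<open>x \<in> V a, y \<in> V b, z \<in> V c\<close>:
  \<open>x \<dashv> (y \<perp> z - \<epsilon>(b,c) z \<perp> y) - \<epsilon>(a,b+c) (y \<perp> z - \<epsilon>(b,c) z \<perp> y) \<turnstile> x\<close>.\<close>

definition trialg_bracket ::
  "('k::field \<Rightarrow> 'v::ab_group_add \<Rightarrow> 'v) \<Rightarrow> ('g::ab_group_add \<Rightarrow> 'g \<Rightarrow> 'k)
   \<Rightarrow> ('v \<Rightarrow> 'v \<Rightarrow> 'v) \<Rightarrow> ('v \<Rightarrow> 'v \<Rightarrow> 'v) \<Rightarrow> ('v \<Rightarrow> 'v \<Rightarrow> 'v)
   \<Rightarrow> 'g \<Rightarrow> 'g \<Rightarrow> 'g \<Rightarrow> 'v \<Rightarrow> 'v \<Rightarrow> 'v \<Rightarrow> 'v" where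
  "trialg_bracket scale eps l p r a b c x y z =
     (let w = p y z - scale (eps b c) (p z y)
      in l x w - scale (eps a (b + c)) (r w x))"

end

theory Submission
  imports Defs
begin

text \<open>The bracket is \<open>[x,y,z] = {x, [y,z]}\<close>, where \<open>[y,z] = y \<bottom> z - \<epsilon>(y,z) z \<bottom> y\<close> is the
  colour commutator of the associative product \<open>\<bottom>\<close> and \<open>{x,m} = x \<stileturn> m - \<epsilon>(x,m) m \<turnstile> x\<close>
  (\<open>perp_commutator\<close> and \<open>dialg_bracket\<close> below, with the degrees of the arguments passed
  explicitly).  By the mixed associativity axioms, \<open>x \<stileturn> -\<close> and \<open>- \<turnstile> x\<close> see a product of three homogeneous
  elements, formed with any of \<open>\<stileturn>, \<bottom>, \<turnstile>\<close>, only through the order of its factors.  Hence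
  \<open>{-,-}\<close> is a colour Leibniz bracket, \<open>{{x,m},w} = {x,{m,w}} + \<epsilon>(m,w) {{x,w},m}\<close>, and inside
  \<open>{x,-}\<close> the map \<open>{-,w}\<close> is a derivation of \<open>[-,-]\<close>:
  \<open>{x,{[y,z],w}} = {x,[y,{z,w}]} + \<epsilon>(z,w) {x,[{y,w},z]}\<close>.  Taking \<open>m = [y,z]\<close>, \<open>w = [t,u]\<close>
  and combining the two identities gives the ternary Leibniz identity on homogeneous elements.
  The bracket is only given on homogeneous elements, so it is extended to the whole space
  trilinearly through homogeneous components.\<close>

section \<open>Graded vector spaces\<close>

locale graded_vector_space =
  fixes scale :: "'k::field \<Rightarrow> 'v::ab_group_add \<Rightarrow> 'v"
    and V :: "'g::ab_group_add \<Rightarrow> 'v set"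
  assumes graded_space: "graded_space scale V"

sublocale graded_vector_space \<subseteq> module scale
  using graded_space unfolding graded_space_def by (elim conjE)

context graded_vector_space
begin

lemma subspace_grade: "subspace (V g)"
  using graded_space unfolding graded_space_def by (elim conjE allE)

lemma unique_decomposition:
  "\<exists>!c. (\<forall>g. c g \<in> V g) \<and> finite {g. c g \<noteq> 0} \<and> v = (\<Sum>g\<in>{g. c g \<noteq> 0}. c g)"
  using graded_space unfolding graded_space_def by (elim conjE allE)

lemma zero_in_grade [simp]: "0 \<in> V g"
  by (rule subspace_0[OF subspace_grade])

lemma add_in_grade: "x \<in> V g \<Longrightarrow> y \<in> V g \<Longrightarrow> x + y \<in> V g"
  by (rule subspace_add[OF subspace_grade])

lemma diff_in_grade: "x \<in> V g \<Longrightarrow> y \<in> V g \<Longrightarrow> x - y \<in> V g"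
  by (rule subspace_diff[OF subspace_grade])

lemma scale_in_grade: "x \<in> V g \<Longrightarrow> scale k x \<in> V g"
  by (rule subspace_scale[OF subspace_grade])

definition homogeneous :: "'v \<Rightarrow> bool"
  where "homogeneous v \<longleftrightarrow> (\<exists>g. v \<in> V g)"

definition component :: "'v \<Rightarrow> 'g \<Rightarrow> 'v"
  where "component v = (THE c. (\<forall>g. c g \<in> V g) \<and> finite {g. c g \<noteq> 0} \<and>
                                  v = (\<Sum>g\<in>{g. c g \<noteq> 0}. c g))"

definition grade_support :: "'v \<Rightarrow> 'g set"
  where "grade_support v = {g. component v g \<noteq> 0}"

lemma component_in_grade: "component v g \<in> V g"
  and finite_grade_support: "finite (grade_support v)"
  and sum_component_grade_support: "(\<Sum>g\<in>grade_support v. component v g) = v"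
proof -
  from theI'[OF unique_decomposition] show "component v g \<in> V g" "finite (grade_support v)"
      "(\<Sum>g\<in>grade_support v. component v g) = v"
    unfolding component_def grade_support_def by auto
qed

lemma sum_component:
  assumes "finite S" "grade_support v \<subseteq> S"
  shows "(\<Sum>g\<in>S. component v g) = v"
proof -
  have "(\<Sum>g\<in>S. component v g) = (\<Sum>g\<in>grade_support v. component v g)"
    by (rule sum.mono_neutral_right[OF assms]) (auto simp: grade_support_def)
  then show ?thesis using sum_component_grade_support by simp
qed

lemma component_unique:
  assumes c: "\<And>g. c g \<in> V g" and S: "finite S" "{g. c g \<noteq> 0} \<subseteq> S" and v: "v = sum c S"
  shows "component v = c"
  unfolding component_def
proof (rule the1_equality)
  show "\<exists>!c. (\<forall>g. c g \<in> V g) \<and> finite {g. c g \<noteq> 0} \<and> v = (\<Sum>g\<in>{g. c g \<noteq> 0}. c g)"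
    by (rule unique_decomposition)
  have "sum c S = (\<Sum>g\<in>{g. c g \<noteq> 0}. c g)"
    by (rule sum.mono_neutral_right[OF S]) blast
  then show "(\<forall>g. c g \<in> V g) \<and> finite {g. c g \<noteq> 0} \<and> v = (\<Sum>g\<in>{g. c g \<noteq> 0}. c g)"
    using c finite_subset[OF S(2,1)] v by simp
qed

lemma component_add: "component (x + y) = (\<lambda>g. component x g + component y g)"
proof (rule component_unique)
  show "component x g + component y g \<in> V g" for g
    by (intro add_in_grade component_in_grade)
  show "finite (grade_support x \<union> grade_support y)"
    by (simp add: finite_grade_support)
  show "{g. component x g + component y g \<noteq> 0} \<subseteq> grade_support x \<union> grade_support y"
    by (auto simp: grade_support_def)
  show "x + y = (\<Sum>g\<in>grade_support x \<union> grade_support y. component x g + component y g)"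
    by (simp add: sum.distrib sum_component finite_grade_support)
qed

lemma component_scale: "component (scale k x) = (\<lambda>g. scale k (component x g))"
proof (rule component_unique)
  show "scale k (component x g) \<in> V g" for g
    by (intro scale_in_grade component_in_grade)
  show "finite (grade_support x)"
    by (rule finite_grade_support)
  show "{g. scale k (component x g) \<noteq> 0} \<subseteq> grade_support x"
    by (auto simp: grade_support_def)
  show "scale k x = (\<Sum>g\<in>grade_support x. scale k (component x g))"
    by (simp add: scale_sum_right[symmetric] sum_component_grade_support)
qed

lemma component_of_grade:
  assumes "x \<in> V a"
  shows "component x = (\<lambda>g. if g = a then x else 0)"
  by (rule component_unique[where S="{a}"]) (use assms in auto)

definition graded_extend :: "('g \<Rightarrow> 'v \<Rightarrow> 'w::comm_monoid_add) \<Rightarrow> 'v \<Rightarrow> 'w"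
  where "graded_extend F v = (\<Sum>g\<in>grade_support v. F g (component v g))"

lemma graded_extend_eq_sum:
  assumes "finite S" "grade_support v \<subseteq> S" "\<And>g. F g 0 = 0"
  shows "graded_extend F v = (\<Sum>g\<in>S. F g (component v g))"
  unfolding graded_extend_def
  by (rule sum.mono_neutral_left) (use assms in \<open>auto simp: grade_support_def\<close>)

lemma graded_extend_of_grade:
  assumes "v \<in> V a" "\<And>g. F g 0 = 0"
  shows "graded_extend F v = F a v"
proof -
  have "graded_extend F v = (\<Sum>g\<in>{a}. F g (component v g))"
    by (rule graded_extend_eq_sum)
      (use assms(2) in \<open>auto simp: grade_support_def component_of_grade[OF assms(1)]\<close>)
  then show ?thesis by (simp add: component_of_grade[OF assms(1)])
qed

lemma graded_extend_fun_add:
  "graded_extend (\<lambda>g u. F g u + F' g u) v = graded_extend F v + graded_extend F' v"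
  unfolding graded_extend_def by (rule sum.distrib)

lemma graded_extend_fun_scale:
  "graded_extend (\<lambda>g u. scale k (F g u)) v = scale k (graded_extend F v)"
  unfolding graded_extend_def by (rule scale_sum_right[symmetric])

lemma graded_extend_fun_zero: "graded_extend (\<lambda>g u. 0) v = 0"
  unfolding graded_extend_def by simp

lemma graded_extend_add:
  assumes "\<And>g. additive (F g)"
  shows "graded_extend F (x + y) = graded_extend F x + graded_extend F y"
proof -
  let ?S = "grade_support x \<union> grade_support y \<union> grade_support (x + y)"
  have fin: "finite ?S" using finite_grade_support by auto
  have zero: "F g 0 = 0" for g using additive.zero[OF assms] .
  have "graded_extend F (x + y) = (\<Sum>g\<in>?S. F g (component x g) + F g (component y g))"
    by (simp add: graded_extend_eq_sum[where S="?S" and F=F, OF fin _ zero] component_add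
        additive.add[OF assms])
  also have "\<dots> = graded_extend F x + graded_extend F y"
    by (subst (1 2) graded_extend_eq_sum[where S="?S" and F=F, OF fin _ zero])
      (auto simp: sum.distrib)
  finally show ?thesis .
qed

lemma graded_extend_scale:
  assumes zero: "\<And>g. F g 0 = 0" and hom: "\<And>g k u. F g (scale k u) = scale k (F g u)"
  shows "graded_extend F (scale k x) = scale k (graded_extend F x)"
proof -
  let ?S = "grade_support x \<union> grade_support (scale k x)"
  have fin: "finite ?S" using finite_grade_support by auto
  show ?thesis
    by (simp add: graded_extend_eq_sum[where S="?S" and F=F, OF fin _ zero] component_scale hom
        scale_sum_right)
qed

lemma additive_graded_extend:
  assumes "\<And>g u. additive (\<lambda>x. F x g u)"
  shows "additive (\<lambda>x. graded_extend (F x) v)"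
proof
  fix x y
  have "F (x + y) g u = F x g u + F y g u" for g u
    by (rule additive.add[OF assms])
  then show "graded_extend (F (x + y)) v = graded_extend (F x) v + graded_extend (F y) v"
    unfolding graded_extend_def by (simp add: sum.distrib)
qed

definition graded_extend3 ::
  "('g \<Rightarrow> 'g \<Rightarrow> 'g \<Rightarrow> 'v \<Rightarrow> 'v \<Rightarrow> 'v \<Rightarrow> 'v) \<Rightarrow> 'v \<Rightarrow> 'v \<Rightarrow> 'v \<Rightarrow> 'v"
  where "graded_extend3 B x y z =
    graded_extend (\<lambda>a x'. graded_extend (\<lambda>b y'. graded_extend (\<lambda>c z'. B a b c x' y' z') z) y) x"

context
  fixes B :: "'g \<Rightarrow> 'g \<Rightarrow> 'g \<Rightarrow> 'v \<Rightarrow> 'v \<Rightarrow> 'v \<Rightarrow> 'v"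
  assumes additive1: "\<And>a b c y z. additive (\<lambda>x. B a b c x y z)"
    and additive2: "\<And>a b c x z. additive (\<lambda>y. B a b c x y z)"
    and additive3: "\<And>a b c x y. additive (\<lambda>z. B a b c x y z)"
    and scale1: "\<And>a b c k x y z. B a b c (scale k x) y z = scale k (B a b c x y z)"
    and scale2: "\<And>a b c k x y z. B a b c x (scale k y) z = scale k (B a b c x y z)"
    and scale3: "\<And>a b c k x y z. B a b c x y (scale k z) = scale k (B a b c x y z)"
begin

lemma multilinear_zero [simp]: "B a b c 0 y z = 0" "B a b c x 0 z = 0" "B a b c x y 0 = 0"
  by (rule additive.zero[OF additive1] additive.zero[OF additive2] additive.zero[OF additive3])+

lemma graded_extend3_of_grade:
  assumes "x \<in> V a" "y \<in> V b" "z \<in> V c"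
  shows "graded_extend3 B x y z = B a b c x y z"
proof -
  have inner: "graded_extend (\<lambda>c z'. B a' b' c x' y' z') z = B a' b' c x' y' z" for a' b' x' y'
    using graded_extend_of_grade[OF assms(3), of "\<lambda>c z'. B a' b' c x' y' z'"] by simp
  have middle: "graded_extend (\<lambda>b y'. B a' b c x' y' z) y = B a' b c x' y z" for a' x'
    using graded_extend_of_grade[OF assms(2), of "\<lambda>b y'. B a' b c x' y' z"] by simp
  have "graded_extend (\<lambda>a x'. B a b c x' y z) x = B a b c x y z"
    using graded_extend_of_grade[OF assms(1), of "\<lambda>a x'. B a b c x' y z"] by simp
  then show ?thesis
    by (simp only: graded_extend3_def inner middle)
qed

lemma graded_extend3_add:
  "graded_extend3 B (x + x') y z = graded_extend3 B x y z + graded_extend3 B x' y z"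
  "graded_extend3 B x (y + y') z = graded_extend3 B x y z + graded_extend3 B x y' z"
  "graded_extend3 B x y (z + z') = graded_extend3 B x y z + graded_extend3 B x y z'"
  unfolding graded_extend3_def
  by (simp_all add: graded_extend_add graded_extend_fun_add additive_graded_extend
      additive1 additive2 additive3)

lemma graded_extend3_scale:
  "graded_extend3 B (scale k x) y z = scale k (graded_extend3 B x y z)"
  "graded_extend3 B x (scale k y) z = scale k (graded_extend3 B x y z)"
  "graded_extend3 B x y (scale k z) = scale k (graded_extend3 B x y z)"
proof -
  have eta: "B a b c 0 y = (\<lambda>z. 0)" "B a b c x 0 = (\<lambda>z. 0)"
    "B a b c (scale k x) y = (\<lambda>z. scale k (B a b c x y z))"
    "B a b c x (scale k y) = (\<lambda>z. scale k (B a b c x y z))"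
    for a b c k x y
    by (simp_all add: scale1 scale2 fun_eq_iff)
  show "graded_extend3 B (scale k x) y z = scale k (graded_extend3 B x y z)"
    "graded_extend3 B x (scale k y) z = scale k (graded_extend3 B x y z)"
    "graded_extend3 B x y (scale k z) = scale k (graded_extend3 B x y z)"
    unfolding graded_extend3_def
    by (simp_all add: graded_extend_scale graded_extend_fun_scale graded_extend_fun_zero
        eta scale3)
qed

lemma even_trilinear_graded_extend3:
  assumes "\<And>a b c x y z. x \<in> V a \<Longrightarrow> y \<in> V b \<Longrightarrow> z \<in> V c \<Longrightarrow> B a b c x y z \<in> V (a + b + c)"
  shows "even_trilinear scale V (graded_extend3 B)"
proof -
  have "graded_extend3 B x y z \<in> V (a + b + c)"
    if "x \<in> V a" "y \<in> V b" "z \<in> V c" for a b c x y z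
    using assms[OF that] by (simp add: graded_extend3_of_grade[OF that])
  then show ?thesis
    unfolding even_trilinear_def by (simp add: graded_extend3_add graded_extend3_scale)
qed

end

end

section \<open>Associative colour trialgebras\<close>

lemma even_bilinear_linear:
  assumes "even_bilinear scale V f"
  shows "f (x + x') y = f x y + f x' y" "f x (y + y') = f x y + f x y'"
    and "f (x - x') y = f x y - f x' y" "f x (y - y') = f x y - f x y'"
    and "f (- x) y = - f x y" "f x (- y) = - f x y"
    and "f 0 y = 0" "f x 0 = 0"
    and "f (scale k x) y = scale k (f x y)" "f x (scale k y) = scale k (f x y)"
proof -
  interpret left: additive "\<lambda>x. f x y" for y
    by unfold_locales (use assms in \<open>simp add: even_bilinear_def\<close>)
  interpret right: additive "f x" for x
    by unfold_locales (use assms in \<open>simp add: even_bilinear_def\<close>)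
  show "f (x + x') y = f x y + f x' y" "f x (y + y') = f x y + f x y'"
    "f (x - x') y = f x y - f x' y" "f x (y - y') = f x y - f x y'"
    "f (- x) y = - f x y" "f x (- y) = - f x y" "f 0 y = 0" "f x 0 = 0"
    using left.add right.add left.diff right.diff left.minus right.minus left.zero right.zero
    by simp_all
  show "f (scale k x) y = scale k (f x y)" "f x (scale k y) = scale k (f x y)"
    using assms by (simp_all add: even_bilinear_def)
qed

lemma even_bilinear_in_grade:
  "even_bilinear scale V f \<Longrightarrow> x \<in> V a \<Longrightarrow> y \<in> V b \<Longrightarrow> f x y \<in> V (a + b)"
  unfolding even_bilinear_def by blast

lemma skew_bicharacter_swap:
  assumes "skew_bicharacter eps"
  shows "eps b a = inverse (eps a b)"
proof -
  have "eps a b * eps b a = 1" "eps a b \<noteq> 0"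
    using assms unfolding skew_bicharacter_def by blast+
  then show ?thesis by (simp add: field_simps)
qed

lemma arg_cong6:
  "\<lbrakk>a = a'; b = b'; c = c'; d = d'; e = e'; g = g'\<rbrakk> \<Longrightarrow> f a b c d e g = f a' b' c' d' e' g'"
  by simp

text \<open>Both sides of the identities below expand into combinations of six fixed vectors; with
  these rules (\<open>Q\<close> kept opaque) they are compared coefficientwise.\<close>

lemma (in module) lincomb6:
  assumes Q: "Q = (\<lambda>c1 c2 c3 c4 c5 c6.
    scale c1 P1 + scale c2 P2 + scale c3 P3 + scale c4 P4 + scale c5 P5 + scale c6 P6)"
  shows "Q c1 c2 c3 c4 c5 c6 + Q d1 d2 d3 d4 d5 d6 =
      Q (c1 + d1) (c2 + d2) (c3 + d3) (c4 + d4) (c5 + d5) (c6 + d6)"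
    "Q c1 c2 c3 c4 c5 c6 - Q d1 d2 d3 d4 d5 d6 =
      Q (c1 - d1) (c2 - d2) (c3 - d3) (c4 - d4) (c5 - d5) (c6 - d6)"
    "- Q c1 c2 c3 c4 c5 c6 = Q (- c1) (- c2) (- c3) (- c4) (- c5) (- c6)"
    "scale k (Q c1 c2 c3 c4 c5 c6) = Q (k * c1) (k * c2) (k * c3) (k * c4) (k * c5) (k * c6)"
    "P1 = Q 1 0 0 0 0 0" "P2 = Q 0 1 0 0 0 0" "P3 = Q 0 0 1 0 0 0"
    "P4 = Q 0 0 0 1 0 0" "P5 = Q 0 0 0 0 1 0" "P6 = Q 0 0 0 0 0 1"
  by (simp_all add: Q scale_left_distrib scale_right_distrib scale_left_diff_distrib
      scale_right_diff_distrib algebra_simps)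

locale color_trialgebra =
  fixes scale :: "'k::field \<Rightarrow> 'v::ab_group_add \<Rightarrow> 'v"
    and V :: "'g::ab_group_add \<Rightarrow> 'v set"
    and eps :: "'g \<Rightarrow> 'g \<Rightarrow> 'k"
    and l p r :: "'v \<Rightarrow> 'v \<Rightarrow> 'v"
  assumes trialgebra: "assoc_color_trialgebra scale V eps l p r"

sublocale color_trialgebra \<subseteq> graded_vector_space scale V
  using trialgebra unfolding assoc_color_trialgebra_def graded_vector_space_def by (elim conjE)

context color_trialgebra
begin

lemma skew_bicharacter: "skew_bicharacter eps"
  using trialgebra unfolding assoc_color_trialgebra_def by (elim conjE)

lemma eps_nonzero: "eps a b \<noteq> 0"
  and eps_add_left: "eps (a + b) c = eps a c * eps b c"
  and eps_add_right: "eps a (b + c) = eps a b * eps a c"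
  using skew_bicharacter unfolding skew_bicharacter_def by blast+

lemmas eps_swap = skew_bicharacter_swap[OF skew_bicharacter]

lemma even_bilinear_ops:
  "even_bilinear scale V l" "even_bilinear scale V p" "even_bilinear scale V r"
  using trialgebra unfolding assoc_color_trialgebra_def by blast+

lemmas ops_linear = even_bilinear_linear[OF even_bilinear_ops(1)]
  even_bilinear_linear[OF even_bilinear_ops(2)] even_bilinear_linear[OF even_bilinear_ops(3)]

lemma ops_in_grade:
  "x \<in> V a \<Longrightarrow> y \<in> V b \<Longrightarrow> l x y \<in> V (a + b)"
  "x \<in> V a \<Longrightarrow> y \<in> V b \<Longrightarrow> p x y \<in> V (a + b)"
  "x \<in> V a \<Longrightarrow> y \<in> V b \<Longrightarrow> r x y \<in> V (a + b)"
  using even_bilinear_in_grade even_bilinear_ops by blast+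

lemma ops_assoc:
  "l (l x y) z = l x (l y z)" "p (p x y) z = p x (p y z)" "r (r x y) z = r x (r y z)"
  using trialgebra unfolding assoc_color_trialgebra_def by blast+

lemma mixed_assoc:
  assumes "homogeneous x" "homogeneous y" "homogeneous z"
  shows "l (l x y) z = l x (r y z)" "l x (r y z) = l x (p y z)"
    and "l (r x y) z = r x (l y z)"
    and "r (l x y) z = r x (r y z)" "r x (r y z) = r (p x y) z"
    and "l (p x y) z = p x (l y z)"
    and "p (l x y) z = p x (r y z)"
    and "p (r x y) z = r x (p y z)"
proof -
  obtain a b c where "x \<in> V a" "y \<in> V b" "z \<in> V c"
    using assms unfolding homogeneous_def by blast
  with trialgebra show "l (l x y) z = l x (r y z)" "l x (r y z) = l x (p y z)"
    "l (r x y) z = r x (l y z)"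
    "r (l x y) z = r x (r y z)" "r x (r y z) = r (p x y) z"
    "l (p x y) z = p x (l y z)"
    "p (l x y) z = p x (r y z)"
    "p (r x y) z = r x (p y z)"
    unfolding assoc_color_trialgebra_def by blast+
qed

lemma homogeneous_ops:
  "f \<in> {l, p, r} \<Longrightarrow> homogeneous x \<Longrightarrow> homogeneous y \<Longrightarrow> homogeneous (f x y)"
  unfolding homogeneous_def using ops_in_grade by blast

lemma left_absorb:
  assumes "f \<in> {l, p, r}" "homogeneous x" "homogeneous u" "homogeneous v"
  shows "l x (f u v) = l (l x u) v"
  using assms mixed_assoc(1,2)[of x u v] ops_assoc(1)[of x u v] by auto

lemma right_absorb:
  assumes "f \<in> {l, p, r}" "homogeneous x" "homogeneous u" "homogeneous v"
  shows "r (f u v) x = r u (r v x)"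
  using assms mixed_assoc(4,5)[of u v x] ops_assoc(3)[of u v x] by auto

definition perp_commutator :: "'g \<Rightarrow> 'g \<Rightarrow> 'v \<Rightarrow> 'v \<Rightarrow> 'v"
  where "perp_commutator b c y z = p y z - scale (eps b c) (p z y)"

definition dialg_bracket :: "'g \<Rightarrow> 'g \<Rightarrow> 'v \<Rightarrow> 'v \<Rightarrow> 'v"
  where "dialg_bracket a b x y = l x y - scale (eps a b) (r y x)"

lemma trialg_bracket_eq:
  "trialg_bracket scale eps l p r a b c x y z = dialg_bracket a (b + c) x (perp_commutator b c y z)"
  unfolding trialg_bracket_def dialg_bracket_def perp_commutator_def Let_def ..

lemma perp_commutator_in_grade:
  "y \<in> V b \<Longrightarrow> z \<in> V c \<Longrightarrow> perp_commutator b c y z \<in> V (b + c)"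
  unfolding perp_commutator_def by (metis ops_in_grade(2) diff_in_grade scale_in_grade add.commute)

lemma dialg_bracket_in_grade:
  "x \<in> V a \<Longrightarrow> y \<in> V b \<Longrightarrow> dialg_bracket a c x y \<in> V (a + b)"
  unfolding dialg_bracket_def by (metis ops_in_grade(1,3) diff_in_grade scale_in_grade add.commute)

lemma trialg_bracket_in_grade:
  "x \<in> V a \<Longrightarrow> y \<in> V b \<Longrightarrow> z \<in> V c \<Longrightarrow>
    trialg_bracket scale eps l p r a b c x y z \<in> V (a + b + c)"
  unfolding trialg_bracket_eq by (metis dialg_bracket_in_grade perp_commutator_in_grade add.assoc)

lemma dialg_bracket_leibniz:
  assumes "x \<in> V a" "y \<in> V b" "z \<in> V c"
  shows "dialg_bracket (a + b) c (dialg_bracket a b x y) z =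
    dialg_bracket a (b + c) x (dialg_bracket b c y z)
    + scale (eps b c) (dialg_bracket (a + c) b (dialg_bracket a c x z) y)"
proof -
  have hom: "homogeneous x" "homogeneous y" "homogeneous z"
    using assms unfolding homogeneous_def by blast+
  have assoc: "l x (l y z) = l (l x y) z" "l x (r z y) = l (l x z) y" "r (l y z) x = r y (r z x)"
    "r (r z y) x = r z (r y x)" "l (r z x) y = r z (l x y)" "l (r y x) z = r y (l x z)"
    using ops_assoc mixed_assoc[OF hom(1,2,3)] mixed_assoc[OF hom(1,3,2)]
      mixed_assoc[OF hom(3,1,2)] mixed_assoc[OF hom(2,1,3)] mixed_assoc[OF hom(2,3,1)]
      mixed_assoc[OF hom(3,2,1)]
    by metis+
  define Q where "Q = (\<lambda>c1 c2 c3 c4 c5 c6.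
    scale c1 (l (l x y) z) + scale c2 (r y (l x z)) + scale c3 (r z (l x y))
    + scale c4 (r z (r y x)) + scale c5 (l (l x z) y) + scale c6 (r y (r z x)))"
  note Q_rules = lincomb6[OF Q_def]
  show ?thesis
    unfolding dialg_bracket_def
    apply (simp only: ops_linear assoc)
    apply (simp only: Q_rules)
    apply (rule arg_cong6[where f = Q])
         apply (simp_all add: eps_add_left eps_add_right eps_swap[of c b] eps_nonzero field_simps)
    done
qed

lemma dialg_bracket_linear:
  "dialg_bracket a b x (y + y') = dialg_bracket a b x y + dialg_bracket a b x y'"
  "dialg_bracket a b x (y - y') = dialg_bracket a b x y - dialg_bracket a b x y'"
  "dialg_bracket a b x (- y) = - dialg_bracket a b x y"
  "dialg_bracket a b x (scale k y) = scale k (dialg_bracket a b x y)"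
  unfolding dialg_bracket_def
  by (simp_all add: ops_linear scale_right_distrib scale_right_diff_distrib
      scale_left_commute[of k] algebra_simps)

definition dialg_bracket3 :: "'g \<Rightarrow> 'g \<Rightarrow> 'v \<Rightarrow> 'v \<Rightarrow> 'v \<Rightarrow> 'v \<Rightarrow> 'v"
  where "dialg_bracket3 a b x u v w = l (l (l x u) v) w - scale (eps a b) (r u (r v (r w x)))"

lemma dialg_bracket_triple:
  assumes "f \<in> {l, p, r}" "g \<in> {l, p, r}"
    and "homogeneous x" "homogeneous u" "homogeneous v" "homogeneous w"
  shows "dialg_bracket a b x (f (g u v) w) = dialg_bracket3 a b x u v w"
    and "dialg_bracket a b x (f u (g v w)) = dialg_bracket3 a b x u v w"
proof -
  have hom: "homogeneous (g u v)" "homogeneous (g v w)" "homogeneous (r w x)"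
    "homogeneous (r v (r w x))" "homogeneous (l x u)"
    using assms homogeneous_ops by auto
  show "dialg_bracket a b x (f (g u v) w) = dialg_bracket3 a b x u v w"
    "dialg_bracket a b x (f u (g v w)) = dialg_bracket3 a b x u v w"
    unfolding dialg_bracket_def dialg_bracket3_def
    using assms hom left_absorb right_absorb by simp_all
qed

lemma dialg_bracket_perp_commutator_derivation:
  assumes "x \<in> V a" "y \<in> V b" "z \<in> V c" "w \<in> V n"
  shows "dialg_bracket a (b + c + n) x (dialg_bracket (b + c) n (perp_commutator b c y z) w) =
    dialg_bracket a (b + c + n) x (perp_commutator b (c + n) y (dialg_bracket c n z w))
    + scale (eps c n)
        (dialg_bracket a (b + c + n) x (perp_commutator (b + n) c (dialg_bracket b n y w) z))"
proof -
  have hom: "homogeneous x" "homogeneous y" "homogeneous z" "homogeneous w"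
    using assms unfolding homogeneous_def by blast+
  have ops: "l \<in> {l, p, r}" "p \<in> {l, p, r}" "r \<in> {l, p, r}"
    by simp_all
  note triples =
    dialg_bracket_triple[of l l] dialg_bracket_triple[of l p] dialg_bracket_triple[of l r]
    dialg_bracket_triple[of p l] dialg_bracket_triple[of p p] dialg_bracket_triple[of p r]
    dialg_bracket_triple[of r l] dialg_bracket_triple[of r p] dialg_bracket_triple[of r r]
  define G where "G = b + c + n"
  define Q where "Q = (\<lambda>c1 c2 c3 c4 c5 c6. scale c1 (dialg_bracket3 a G x y z w)
    + scale c2 (dialg_bracket3 a G x z y w) + scale c3 (dialg_bracket3 a G x w y z)
    + scale c4 (dialg_bracket3 a G x w z y) + scale c5 (dialg_bracket3 a G x y w z)
    + scale c6 (dialg_bracket3 a G x z w y))"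
  note Q_rules = lincomb6[OF Q_def]
  show ?thesis
    unfolding G_def[symmetric]
    apply (simp only: dialg_bracket_def[of "b + c"] dialg_bracket_def[of c] dialg_bracket_def[of b]
        perp_commutator_def)
    apply (simp only: ops_linear dialg_bracket_linear)
    apply (simp only: triples ops hom simp_thms)
    apply (simp only: Q_rules)
    apply (rule arg_cong6[where f = Q])
         apply (simp_all add: eps_add_left eps_add_right eps_swap[of c b] eps_swap[of n b]
        eps_swap[of n c] eps_nonzero field_simps)
    done
qed

abbreviation bracket :: "'g \<Rightarrow> 'g \<Rightarrow> 'g \<Rightarrow> 'v \<Rightarrow> 'v \<Rightarrow> 'v \<Rightarrow> 'v"
  where "bracket \<equiv> trialg_bracket scale eps l p r"

lemma bracket_leibniz:
  assumes x: "x \<in> V a" and y: "y \<in> V b" and z: "z \<in> V c" and t: "t \<in> V d" and u: "u \<in> V e"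
  shows "bracket (a + b + c) d e (bracket a b c x y z) t u =
    bracket a b (c + d + e) x y (bracket c d e z t u)
    + scale (eps c (d + e)) (bracket a (b + d + e) c x (bracket b d e y t u) z)
    + scale (eps (b + c) (d + e)) (bracket (a + d + e) b c (bracket a d e x t u) y z)"
proof -
  define n where "n = d + e"
  define m where "m = perp_commutator b c y z"
  define w where "w = perp_commutator d e t u"
  have m: "m \<in> V (b + c)" and w: "w \<in> V n"
    unfolding m_def w_def n_def using perp_commutator_in_grade y z t u by blast+
  have degrees: "a + b + c = a + (b + c)" "c + d + e = c + n" "b + d + e = b + n"
    "a + d + e = a + n"
    unfolding n_def by (simp_all add: add_ac)
  show ?thesis
    unfolding trialg_bracket_eq degrees n_def[symmetric] m_def[symmetric] w_def[symmetric]
      dialg_bracket_leibniz[OF x m w]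
    using dialg_bracket_perp_commutator_derivation[OF x y z w] by (simp add: m_def add_ac)
qed

lemma bracket_linear:
  "bracket a b c (x + x') y z = bracket a b c x y z + bracket a b c x' y z"
  "bracket a b c x (y + y') z = bracket a b c x y z + bracket a b c x y' z"
  "bracket a b c x y (z + z') = bracket a b c x y z + bracket a b c x y z'"
  "bracket a b c (scale k x) y z = scale k (bracket a b c x y z)"
  "bracket a b c x (scale k y) z = scale k (bracket a b c x y z)"
  "bracket a b c x y (scale k z) = scale k (bracket a b c x y z)"
  unfolding trialg_bracket_def Let_def
  by (simp_all add: ops_linear scale_right_distrib scale_right_diff_distrib
      scale_left_commute[of k] algebra_simps)

lemma bracket_additive:
  "additive (\<lambda>x. bracket a b c x y z)" "additive (\<lambda>y. bracket a b c x y z)"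
  "additive (\<lambda>z. bracket a b c x y z)"
  by (unfold_locales; rule bracket_linear)+

lemmas graded_extend3_bracket_of_grade =
  graded_extend3_of_grade[where B = bracket, OF bracket_additive bracket_linear(4-6)]

lemma ternary_leibniz_color_extension:
  "ternary_leibniz_color scale V eps (graded_extend3 bracket)"
  unfolding ternary_leibniz_color_def
proof (intro conjI allI impI)
  show "graded_space scale V"
    by (rule graded_space)
  show "skew_bicharacter eps"
    by (rule skew_bicharacter)
  show "even_trilinear scale V (graded_extend3 bracket)"
    by (rule even_trilinear_graded_extend3[where B = bracket,
          OF bracket_additive bracket_linear(4-6) trialg_bracket_in_grade])
  fix a b c d e x y z t u
  assume h: "x \<in> V a" "y \<in> V b" "z \<in> V c" "t \<in> V d" "u \<in> V e"
  note inner = trialg_bracket_in_grade[OF h(1-3)] trialg_bracket_in_grade[OF h(3-5)]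
    trialg_bracket_in_grade[OF h(2,4,5)] trialg_bracket_in_grade[OF h(1,4,5)]
  show "graded_extend3 bracket (graded_extend3 bracket x y z) t u =
    graded_extend3 bracket x y (graded_extend3 bracket z t u)
    + scale (eps c (d + e)) (graded_extend3 bracket x (graded_extend3 bracket y t u) z)
    + scale (eps (b + c) (d + e)) (graded_extend3 bracket (graded_extend3 bracket x t u) y z)"
    unfolding graded_extend3_bracket_of_grade[OF h(1-3)] graded_extend3_bracket_of_grade[OF h(3-5)]
      graded_extend3_bracket_of_grade[OF h(2,4,5)] graded_extend3_bracket_of_grade[OF h(1,4,5)]
      graded_extend3_bracket_of_grade[OF inner(1) h(4,5)]
      graded_extend3_bracket_of_grade[OF h(1,2) inner(2)]
      graded_extend3_bracket_of_grade[OF h(1) inner(3) h(3)]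
      graded_extend3_bracket_of_grade[OF inner(4) h(2,3)]
    by (rule bracket_leibniz[OF h])
qed

end

theorem mainTheorem10:
  fixes scale :: "'k::field \<Rightarrow> 'v::ab_group_add \<Rightarrow> 'v"
    and V :: "'g::ab_group_add \<Rightarrow> 'v set"
    and eps :: "'g \<Rightarrow> 'g \<Rightarrow> 'k"
    and l p r :: "'v \<Rightarrow> 'v \<Rightarrow> 'v"
  assumes char: "(2::'k) \<noteq> 0"
    and tri: "assoc_color_trialgebra scale V eps l p r"
  shows "\<exists>T. ternary_leibniz_color scale V eps T \<and>
           (\<forall>a b c x y z. x \<in> V a \<longrightarrow> y \<in> V b \<longrightarrow> z \<in> V c \<longrightarrow>
              T x y z = trialg_bracket scale eps l p r a b c x y z)"
proof -
  interpret color_trialgebra scale V eps l p r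
    by (rule color_trialgebra.intro[OF tri])
  show ?thesis
    using ternary_leibniz_color_extension graded_extend3_bracket_of_grade by blast
qed

end
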